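(* Let $G$ be a plane graph with a face $f$ whose facial walk $v_1v_2\dots v_rv_1$ has length $r\ge3$, and let $G'$ be obtained from $G$ by attaching a web to $f$. Then (i) for any $u,v\in V(G)$, $\mathrm{dist}_{G'}(u,v)=\mathrm{dist}_G(u,v)$, and moreover no shortest $(u,v)$-path in $G'$ contains an inner vertex of the attached web; (ii) for every vertex $v$ of the attached web there is a vertex $u\in V(G)$ with $\mathrm{dist}_{G'}(u,v)\le r$.
   Context: For $r\ge3$, the web $W_r(v_1,\dots,v_r)$ is the graph constructed as follows: take vertices $v_1,\dots,v_r$ and $u$; for each $i\in\{1,\dots,r\}$ add a path $x^i_0x^i_1\dots x^i_r$ of length $r$ with $x^i_0=v_i$ and $x^i_r=u$; for each $j\in\{1,\dots,r-1\}$ add the cycle $x^1_jx^2_j\dots x^r_jx^1_j$; for each $i\in\{1,\dots,r\}$ and $j\in\{1,\dots,r-1\}$ add the edge $\{x^{i-1}_{j-1},x^i_j\}$, where indices are such that $x^0_j=x^r_j$. The inner vertices of the web are all its vertices other than $v_1,\dots,v_r$. Attaching a web to a face $f$ with facial walk $v_1\dots v_rv_1$ means adding a copy of $W_r(v_1,\dots,v_r)$ whose vertices $v_1,\dots,v_r$ are identified with the vertices of the facial walk (vertices may repeat in the walk) and drawing it inside $f$ without crossings, with the concentric cycles nested around the center $u$. Distances are unweighted shortest-path distances. *)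

theory Defs
  imports Main "HOL-Library.Extended_Nat"
begin

definition simple_graph :: "'a set \<Rightarrow> ('a \<Rightarrow> 'a \<Rightarrow> bool) \<Rightarrow> bool" where
  "simple_graph V E \<longleftrightarrow> finite V \<and> (\<forall>x y. E x y \<longrightarrow> x \<in> V \<and> y \<in> V \<and> x \<noteq> y \<and> E y x)"

definition walk_betw :: "('a \<Rightarrow> 'a \<Rightarrow> bool) \<Rightarrow> 'a \<Rightarrow> 'a list \<Rightarrow> 'a \<Rightarrow> bool" where
  "walk_betw E u p w \<longleftrightarrow> p \<noteq> [] \<and> hd p = u \<and> last p = w \<and>
     (\<forall>i. Suc i < length p \<longrightarrow> E (p ! i) (p ! Suc i))"

text \<open>Unweighted shortest-path distance (infinity if no walk exists).\<close>
definition dist :: "('a \<Rightarrow> 'a \<Rightarrow> bool) \<Rightarrow> 'a \<Rightarrow> 'a \<Rightarrow> enat" where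
  "dist E u w = (INF p \<in> {p. walk_betw E u p w}. enat (length p - 1))"

definition shortest_path :: "('a \<Rightarrow> 'a \<Rightarrow> bool) \<Rightarrow> 'a \<Rightarrow> 'a list \<Rightarrow> 'a \<Rightarrow> bool" where
  "shortest_path E u p w \<longleftrightarrow> walk_betw E u p w \<and> distinct p \<and> enat (length p - 1) = dist E u w"

text \<open>Indices are 0-based: \<open>v i\<close> (for \<open>i < r\<close>) is
  the paper's \<open>v_{i+1}\<close>, and the first index of \<open>x\<close> is taken modulo \<open>r\<close>.
  Vertices of the new graph have type \<open>'a + nat \<times> nat\<close>: \<open>Inl a\<close> is the old vertex \<open>a\<close>,
  \<open>Inr (i,j)\<close> with \<open>0 < j < r\<close> is the inner vertex \<open>x^i_j\<close>, \<open>Inr (0,r)\<close> is the centre \<open>u\<close>.\<close>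

definition web_vtx :: "(nat \<Rightarrow> 'a) \<Rightarrow> nat \<Rightarrow> nat \<Rightarrow> nat \<Rightarrow> 'a + nat \<times> nat" where
  "web_vtx v r i j = (if j = 0 then Inl (v (i mod r)) else if j = r then Inr (0, r)
                      else Inr (i mod r, j))"

definition web_vertices :: "(nat \<Rightarrow> 'a) \<Rightarrow> nat \<Rightarrow> ('a + nat \<times> nat) set" where
  "web_vertices v r = {web_vtx v r i j | i j. i < r \<and> j \<le> r}"

definition web_inner_vertices :: "(nat \<Rightarrow> 'a) \<Rightarrow> nat \<Rightarrow> ('a + nat \<times> nat) set" where
  "web_inner_vertices v r = {web_vtx v r i j | i j. i < r \<and> 0 < j \<and> j \<le> r}"

definition web_edge :: "(nat \<Rightarrow> 'a) \<Rightarrow> nat \<Rightarrow> 'a + nat \<times> nat \<Rightarrow> 'a + nat \<times> nat \<Rightarrow> bool" where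
  "web_edge v r a b \<longleftrightarrow>
     (\<exists>i j. i < r \<and> j < r \<and> a = web_vtx v r i j \<and> b = web_vtx v r i (Suc j)) \<or>
     (\<exists>i j. i < r \<and> 1 \<le> j \<and> j \<le> r - 1 \<and> a = web_vtx v r i j \<and> b = web_vtx v r (Suc i) j) \<or>
     (\<exists>i j. i < r \<and> 1 \<le> j \<and> j \<le> r - 1 \<and> a = web_vtx v r (i + r - 1) (j - 1) \<and> b = web_vtx v r i j)"

definition attach_web_V :: "'a set \<Rightarrow> (nat \<Rightarrow> 'a) \<Rightarrow> nat \<Rightarrow> ('a + nat \<times> nat) set" where
  "attach_web_V V v r = Inl ` V \<union> web_vertices v r"

definition attach_web_E :: "('a \<Rightarrow> 'a \<Rightarrow> bool) \<Rightarrow> (nat \<Rightarrow> 'a) \<Rightarrow> nat \<Rightarrow>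
    'a + nat \<times> nat \<Rightarrow> 'a + nat \<times> nat \<Rightarrow> bool" where
  "attach_web_E E v r a b \<longleftrightarrow>
     (\<exists>x y. a = Inl x \<and> b = Inl y \<and> E x y) \<or> web_edge v r a b \<or> web_edge v r b a"

end

theory Submission
  imports Defs
begin

text \<open>Every inner web vertex \<open>x^i_j\<close> (\<open>j \<ge> 1\<close>) sees an arc of the face boundary, the
  \<open>j + 1\<close> vertices \<open>v_{i-j}, \<dots>, v_i\<close> (all of them for the centre).  Along any walk from an old
  vertex \<open>a\<close>, an inner vertex \<open>x^i_j\<close> reached after \<open>n\<close> steps satisfies the invariant
  \<open>dist_G(a, v_k) + j \<le> n\<close> for some \<open>v_k\<close> on its arc: every web edge changes the level \<open>j\<close> and
  the arc in a way that can be paid for by at most one boundary edge of \<open>G\<close>.  Leaving the web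
  through an edge \<open>x^i_1 v\<close> gains one step, since \<open>v\<close> is at most one boundary edge away from
  the arc \<open>{v_{i-1}, v_i}\<close>.  Hence walks through the web are never shorter than walks in \<open>G\<close>,
  and walks visiting inner vertices are strictly longer.\<close>

section \<open>Arithmetic on the cycle \<open>{0..<r}\<close>\<close>

definition cyc_succ :: "nat \<Rightarrow> nat \<Rightarrow> nat" where
  "cyc_succ r i = (if Suc i = r then 0 else Suc i)"

definition cyc_pred :: "nat \<Rightarrow> nat \<Rightarrow> nat" where
  "cyc_pred r i = (if i = 0 then r - 1 else i - 1)"

text \<open>\<open>cyc_gap r i k\<close> is the number of forward steps from \<open>k\<close> to \<open>i\<close> on the cycle.\<close>
definition cyc_gap :: "nat \<Rightarrow> nat \<Rightarrow> nat \<Rightarrow> nat" where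
  "cyc_gap r i k = (if k \<le> i then i - k else i + r - k)"

lemma Suc_mod_eq_cyc_succ: "i < r \<Longrightarrow> Suc i mod r = cyc_succ r i"
  by (auto simp: cyc_succ_def)

lemma add_pred_mod_eq_cyc_pred: "i < r \<Longrightarrow> (i + r - 1) mod r = cyc_pred r i"
  by (cases i) (auto simp: cyc_pred_def)

lemma cyc_succ_less: "i < r \<Longrightarrow> cyc_succ r i < r"
  by (auto simp: cyc_succ_def)

lemma cyc_pred_less: "i < r \<Longrightarrow> cyc_pred r i < r"
  by (auto simp: cyc_pred_def)

lemma cyc_pred_succ: "i < r \<Longrightarrow> cyc_pred r (cyc_succ r i) = i"
  by (auto simp: cyc_pred_def cyc_succ_def)

lemma cyc_succ_pred: "i < r \<Longrightarrow> cyc_succ r (cyc_pred r i) = i"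
  by (auto simp: cyc_pred_def cyc_succ_def)

lemma cyc_gap_less: "i < r \<Longrightarrow> k < r \<Longrightarrow> cyc_gap r i k < r"
  by (auto simp: cyc_gap_def)

lemma cyc_gap_eq_0_iff: "i < r \<Longrightarrow> k < r \<Longrightarrow> cyc_gap r i k = 0 \<longleftrightarrow> k = i"
  by (auto simp: cyc_gap_def)

lemma cyc_gap_self: "cyc_gap r i i = 0"
  by (simp add: cyc_gap_def)

lemma cyc_gap_succ_right:
  "i < r \<Longrightarrow> k < r \<Longrightarrow> cyc_gap r i k = Suc t \<Longrightarrow> cyc_gap r i (cyc_succ r k) = t"
  by (auto simp: cyc_gap_def cyc_succ_def split: if_splits)

lemma cyc_gap_pred_left:
  "i < r \<Longrightarrow> k < r \<Longrightarrow> cyc_gap r i k = Suc t \<Longrightarrow> cyc_gap r (cyc_pred r i) k = t"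
  by (auto simp: cyc_gap_def cyc_pred_def split: if_splits)

lemma cyc_gap_pred_left_Suc:
  "i < r \<Longrightarrow> k < r \<Longrightarrow> cyc_gap r (cyc_pred r i) k < r - 1 \<Longrightarrow>
    cyc_gap r i k = Suc (cyc_gap r (cyc_pred r i) k)"
  by (auto simp: cyc_gap_def cyc_pred_def split: if_splits)

lemma cyc_gap_succ_succ: "i < r \<Longrightarrow> k < r \<Longrightarrow> cyc_gap r (cyc_succ r i) (cyc_succ r k) = cyc_gap r i k"
  by (auto simp: cyc_gap_def cyc_succ_def split: if_splits)

lemma cyc_gap_pred_pred: "i < r \<Longrightarrow> k < r \<Longrightarrow> cyc_gap r (cyc_pred r i) (cyc_pred r k) = cyc_gap r i k"
  by (auto simp: cyc_gap_def cyc_pred_def split: if_splits)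

lemma cyc_gap_pred_right_self: "2 \<le> r \<Longrightarrow> i < r \<Longrightarrow> cyc_gap r i (cyc_pred r i) = 1"
  by (auto simp: cyc_gap_def cyc_pred_def)

section \<open>Coordinates of web vertices\<close>

lemma web_vtx_mod: "web_vtx v r (i mod r) j = web_vtx v r i j"
  by (simp add: web_vtx_def)

lemma web_vtx_Suc: "i < r \<Longrightarrow> web_vtx v r (Suc i) j = web_vtx v r (cyc_succ r i) j"
  by (metis Suc_mod_eq_cyc_succ web_vtx_mod)

lemma web_vtx_add_pred: "i < r \<Longrightarrow> web_vtx v r (i + r - 1) j = web_vtx v r (cyc_pred r i) j"
  by (metis add_pred_mod_eq_cyc_pred web_vtx_mod)

lemma web_vtx_eq:
  "i < r \<Longrightarrow> web_vtx v r i j = (if j = 0 then Inl (v i) else if j = r then Inr (0, r) else Inr (i, j))"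
  by (simp add: web_vtx_def)

lemma web_vtx_eq_Inl_iff: "web_vtx v r i j = Inl c \<longleftrightarrow> j = 0 \<and> c = v (i mod r)"
  by (auto simp: web_vtx_def)

lemma web_vtx_Inr: "j \<noteq> 0 \<Longrightarrow> \<exists>z. web_vtx v r i j = Inr z"
  by (cases "j = r") (auto simp: web_vtx_def)

lemma web_vtx_inj:
  assumes "i < r" "i' < r" "1 \<le> j" "j \<le> r" "1 \<le> j'" "j' \<le> r"
    and "web_vtx v r i j = web_vtx v r i' j'"
  shows "j = j' \<and> (j < r \<longrightarrow> i = i')"
  using assms by (auto simp: web_vtx_eq split: if_splits)

lemma web_edge_target_Inr: "web_edge v r x y \<Longrightarrow> \<exists>z. y = Inr z"
  unfolding web_edge_def by (auto simp: web_vtx_def)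

section \<open>Walks and distances\<close>

lemma walk_betw_snoc:
  assumes "walk_betw E a q b" "E b c"
  shows "walk_betw E a (q @ [c]) c"
proof -
  have "E ((q @ [c]) ! i) ((q @ [c]) ! Suc i)" if "Suc i < length (q @ [c])" for i
  proof (cases "Suc i < length q")
    case True
    then show ?thesis using assms(1) by (simp add: walk_betw_def nth_append)
  next
    case False
    then have "i = length q - 1" "q \<noteq> []"
      using that assms(1) by (auto simp: walk_betw_def)
    then show ?thesis using assms by (simp add: walk_betw_def nth_append last_conv_nth)
  qed
  then show ?thesis using assms(1) by (auto simp: walk_betw_def)
qed

lemma walk_betw_snocD:
  assumes "walk_betw E a (p @ [y]) w" "p \<noteq> []"
  shows "walk_betw E a p (last p)" "E (last p) y" "w = y"
proof -
  have edge: "E ((p @ [y]) ! i) ((p @ [y]) ! Suc i)" if "Suc i < length (p @ [y])" for i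
    using assms(1) that by (auto simp: walk_betw_def)
  have "E (p ! i) (p ! Suc i)" if "Suc i < length p" for i
    using edge[of i] that by (simp add: nth_append)
  then show "walk_betw E a p (last p)"
    using assms by (auto simp: walk_betw_def hd_append)
  show "E (last p) y"
    using edge[of "length p - 1"] assms(2) by (simp add: nth_append last_conv_nth)
  show "w = y"
    using assms(1) by (simp add: walk_betw_def)
qed

lemma walk_betw_map:
  assumes "walk_betw E a q b" "\<And>x y. E x y \<Longrightarrow> E' (f x) (f y)"
  shows "walk_betw E' (f a) (map f q) (f b)"
  using assms by (auto simp: walk_betw_def hd_map last_map)

lemma dist_le_walk: "walk_betw E a p b \<Longrightarrow> dist E a b \<le> enat (length p - 1)"
  unfolding dist_def by (rule INF_lower) simp

lemma le_dist_iff: "d \<le> dist E a b \<longleftrightarrow> (\<forall>p. walk_betw E a p b \<longrightarrow> d \<le> enat (length p - 1))"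
  unfolding dist_def by (auto simp: le_INF_iff)

definition reachable_within :: "('a \<Rightarrow> 'a \<Rightarrow> bool) \<Rightarrow> 'a \<Rightarrow> 'a \<Rightarrow> nat \<Rightarrow> bool" where
  "reachable_within E a b n \<longleftrightarrow> (\<exists>q. walk_betw E a q b \<and> length q \<le> Suc n)"

lemma reachable_within_refl: "reachable_within E a a 0"
  unfolding reachable_within_def by (intro exI[of _ "[a]"]) (simp add: walk_betw_def)

lemma reachable_within_mono: "reachable_within E a b n \<Longrightarrow> n \<le> m \<Longrightarrow> reachable_within E a b m"
  unfolding reachable_within_def by force

lemma reachable_within_step:
  "reachable_within E a b n \<Longrightarrow> E b c \<Longrightarrow> reachable_within E a c (Suc n)"
  unfolding reachable_within_def using walk_betw_snoc by fastforce

lemma dist_le_reachable_within: "reachable_within E a b n \<Longrightarrow> dist E a b \<le> enat n"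
proof -
  assume "reachable_within E a b n"
  then obtain q where "walk_betw E a q b" "length q \<le> Suc n"
    by (auto simp: reachable_within_def)
  then show ?thesis
    using dist_le_walk[of E a q b] by (simp add: order_trans[where y = "enat (length q - 1)"])
qed

section \<open>Walks in a graph with an attached web\<close>

locale web_attachment =
  fixes E :: "'a \<Rightarrow> 'a \<Rightarrow> bool" and v :: "nat \<Rightarrow> 'a" and r :: nat
  assumes sym: "E x y \<Longrightarrow> E y x"
    and boundary_walk: "i < r \<Longrightarrow> E (v i) (v (Suc i mod r))"
    and r_ge_2: "2 \<le> r"
begin

lemma boundary_succ: "k < r \<Longrightarrow> E (v k) (v (cyc_succ r k))"
  using boundary_walk Suc_mod_eq_cyc_succ by metis

lemma boundary_pred: "k < r \<Longrightarrow> E (v k) (v (cyc_pred r k))"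
  using sym boundary_succ[of "cyc_pred r k"] cyc_succ_pred cyc_pred_less by metis

text \<open>The invariant of the proof for an inner vertex \<open>x\<close>.  It is imposed on all coordinates
  of \<open>x\<close>, which only matters for the centre.\<close>
definition shadow_reach :: "'a \<Rightarrow> 'a + nat \<times> nat \<Rightarrow> nat \<Rightarrow> bool" where
  "shadow_reach a x n \<longleftrightarrow> (\<exists>k d. k < r \<and> reachable_within E a (v k) d \<and>
     (\<forall>i j. i < r \<longrightarrow> 1 \<le> j \<longrightarrow> j \<le> r \<longrightarrow> x = web_vtx v r i j \<longrightarrow> cyc_gap r i k \<le> j \<and> d + j \<le> n))"

lemma shadow_reachI:
  assumes "k < r" "reachable_within E a (v k) d" "i < r" "1 \<le> j" "j \<le> r"
    and "cyc_gap r i k \<le> j" "d + j \<le> n"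
  shows "shadow_reach a (web_vtx v r i j) n"
  unfolding shadow_reach_def
proof (intro exI conjI allI impI)
  fix i' j' assume "i' < r" "1 \<le> j'" "j' \<le> r" "web_vtx v r i j = web_vtx v r i' j'"
  then have "j' = j \<and> (j < r \<longrightarrow> i' = i)"
    using web_vtx_inj[of i r i' j j' v] assms by auto
  then show "cyc_gap r i' k \<le> j'" "d + j' \<le> n"
    using assms cyc_gap_less[of i' r k] \<open>i' < r\<close> by (auto simp: le_less)
qed (use assms in auto)

lemma shadow_reachE:
  assumes "shadow_reach a (web_vtx v r i j) n" "i < r" "1 \<le> j" "j \<le> r"
  obtains k d where "k < r" "reachable_within E a (v k) d" "cyc_gap r i k \<le> j" "d + j \<le> n"
  using assms unfolding shadow_reach_def by blast

text \<open>The bound inherited by a neighbour \<open>y\<close> of an inner vertex with \<open>shadow_reach a x n\<close>: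
  stepping from the web onto \<open>G\<close> costs nothing, which is where walks through the web lose.\<close>
definition neighbour_bound :: "'a \<Rightarrow> 'a + nat \<times> nat \<Rightarrow> nat \<Rightarrow> bool" where
  "neighbour_bound a y n = (case y of Inl c \<Rightarrow> reachable_within E a c n
                                    | Inr _ \<Rightarrow> shadow_reach a y (Suc n))"

lemma neighbour_bound_inner:
  "j \<noteq> 0 \<Longrightarrow> shadow_reach a (web_vtx v r i j) (Suc n) \<Longrightarrow> neighbour_bound a (web_vtx v r i j) n"
  using web_vtx_Inr[of j v r i] by (auto simp: neighbour_bound_def)

lemma neighbour_bound_boundary:
  "i < r \<Longrightarrow> reachable_within E a (v i) n \<Longrightarrow> neighbour_bound a (web_vtx v r i 0) n"
  by (simp add: neighbour_bound_def web_vtx_eq)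

lemma shadow_reach_spoke_up:
  assumes "i < r" "1 \<le> j" "j < r" "shadow_reach a (web_vtx v r i j) n"
  shows "shadow_reach a (web_vtx v r i (Suc j)) (Suc n)"
proof -
  obtain k d where "k < r" "reachable_within E a (v k) d" "cyc_gap r i k \<le> j" "d + j \<le> n"
    using shadow_reachE[OF assms(4)] assms by auto
  then show ?thesis
    by (intro shadow_reachI[of k a d]) (use assms in auto)
qed

lemma shadow_reach_spoke_down:
  assumes "i < r" "j < r" "shadow_reach a (web_vtx v r i (Suc j)) n"
  shows "neighbour_bound a (web_vtx v r i j) n"
proof -
  obtain k d where k: "k < r" "reachable_within E a (v k) d" "cyc_gap r i k \<le> Suc j" "d + Suc j \<le> n"
    using shadow_reachE[OF assms(3)] assms by auto
  show ?thesis
  proof (cases "cyc_gap r i k \<le> j")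
    case True
    show ?thesis
    proof (cases "j = 0")
      case True
      then have "k = i"
        using \<open>cyc_gap r i k \<le> j\<close> cyc_gap_eq_0_iff assms(1) k(1) by simp
      then show ?thesis
        using True k assms(1) reachable_within_mono[OF k(2), of n] neighbour_bound_boundary by simp
    next
      case False
      then show ?thesis
        by (intro neighbour_bound_inner shadow_reachI[of k a d]) (use assms k True in auto)
    qed
  next
    case False
    \<comment> \<open>\<open>v_k\<close> leaves the arc one level down; its successor on the boundary takes its place\<close>
    then have gap: "cyc_gap r i (cyc_succ r k) = j"
      using k cyc_gap_succ_right[of i r k j] assms by auto
    have succ: "reachable_within E a (v (cyc_succ r k)) (Suc d)"
      using reachable_within_step[OF k(2) boundary_succ[OF k(1)]] .
    show ?thesis
    proof (cases "j = 0")
      case True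
      then have "cyc_succ r k = i"
        using gap cyc_gap_eq_0_iff assms(1) cyc_succ_less[OF k(1)] by simp
      then show ?thesis
        using True k assms(1) reachable_within_mono[OF succ, of n] neighbour_bound_boundary by simp
    next
      case False
      then show ?thesis
        by (intro neighbour_bound_inner shadow_reachI[of "cyc_succ r k" a "Suc d"])
          (use assms k succ gap cyc_succ_less in auto)
    qed
  qed
qed

lemma shadow_reach_rim_succ:
  assumes "i < r" "1 \<le> j" "j < r" "shadow_reach a (web_vtx v r i j) n"
  shows "shadow_reach a (web_vtx v r (cyc_succ r i) j) (Suc n)"
proof -
  obtain k d where k: "k < r" "reachable_within E a (v k) d" "cyc_gap r i k \<le> j" "d + j \<le> n"
    using shadow_reachE[OF assms(4)] assms by auto
  have "reachable_within E a (v (cyc_succ r k)) (Suc d)"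
    using reachable_within_step[OF k(2) boundary_succ[OF k(1)]] .
  then show ?thesis
    by (intro shadow_reachI[of "cyc_succ r k" a "Suc d"])
      (use assms k cyc_gap_succ_succ cyc_succ_less in auto)
qed

lemma shadow_reach_rim_pred:
  assumes "i < r" "1 \<le> j" "j < r" "shadow_reach a (web_vtx v r (cyc_succ r i) j) n"
  shows "shadow_reach a (web_vtx v r i j) (Suc n)"
proof -
  obtain k d where k: "k < r" "reachable_within E a (v k) d" "cyc_gap r (cyc_succ r i) k \<le> j" "d + j \<le> n"
    using shadow_reachE[OF assms(4)] assms cyc_succ_less by auto
  have "cyc_gap r i (cyc_pred r k) = cyc_gap r (cyc_succ r i) k"
    using cyc_gap_pred_pred[of "cyc_succ r i" r k] cyc_pred_succ cyc_succ_less assms k by metis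
  moreover have "reachable_within E a (v (cyc_pred r k)) (Suc d)"
    using reachable_within_step[OF k(2) boundary_pred[OF k(1)]] .
  ultimately show ?thesis
    by (intro shadow_reachI[of "cyc_pred r k" a "Suc d"]) (use assms k cyc_pred_less in auto)
qed

lemma shadow_reach_diagonal_up:
  assumes "i < r" "2 \<le> j" "j < r" "shadow_reach a (web_vtx v r (cyc_pred r i) (j - 1)) n"
  shows "shadow_reach a (web_vtx v r i j) (Suc n)"
proof -
  have "1 \<le> j - 1" "j - 1 \<le> r" "cyc_pred r i < r"
    using assms cyc_pred_less by auto
  then obtain k d where k: "k < r" "reachable_within E a (v k) d"
    "cyc_gap r (cyc_pred r i) k \<le> j - 1" "d + (j - 1) \<le> n"
    using shadow_reachE[OF assms(4)] by metis
  have "cyc_gap r i k = Suc (cyc_gap r (cyc_pred r i) k)"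
    using cyc_gap_pred_left_Suc[of i r k] assms k by auto
  then show ?thesis
    by (intro shadow_reachI[of k a d]) (use assms k in auto)
qed

lemma shadow_reach_diagonal_down:
  assumes "i < r" "1 \<le> j" "j < r" "shadow_reach a (web_vtx v r i j) n"
  shows "neighbour_bound a (web_vtx v r (cyc_pred r i) (j - 1)) n"
proof -
  obtain k d where k: "k < r" "reachable_within E a (v k) d" "cyc_gap r i k \<le> j" "d + j \<le> n"
    using shadow_reachE[OF assms(4)] assms by auto
  have i': "cyc_pred r i < r"
    using cyc_pred_less[OF assms(1)] .
  show ?thesis
  proof (cases "cyc_gap r i k")
    case 0
    \<comment> \<open>\<open>v_k = v_i\<close> leaves the arc; its predecessor on the boundary takes its place\<close>
    then have "k = i"
      using cyc_gap_eq_0_iff assms(1) k(1) by blast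
    have pred: "reachable_within E a (v (cyc_pred r i)) (Suc d)"
      using reachable_within_step[OF k(2) boundary_pred[OF k(1)]] \<open>k = i\<close> by simp
    show ?thesis
    proof (cases "j = 1")
      case True
      then show ?thesis
        using i' k reachable_within_mono[OF pred, of n] neighbour_bound_boundary by simp
    next
      case False
      then show ?thesis
        by (intro neighbour_bound_inner shadow_reachI[of "cyc_pred r i" a "Suc d"])
          (use assms k pred i' cyc_gap_self in auto)
    qed
  next
    case (Suc t)
    then have gap: "cyc_gap r (cyc_pred r i) k = t"
      using cyc_gap_pred_left assms(1) k(1) by blast
    show ?thesis
    proof (cases "j = 1")
      case True
      with Suc gap have "k = cyc_pred r i"
        using cyc_gap_eq_0_iff i' k(1,3) by auto
      then show ?thesis
        using True k reachable_within_mono[OF k(2), of n] neighbour_bound_boundary i' by simp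
    next
      case False
      then show ?thesis
        by (intro neighbour_bound_inner shadow_reachI[of k a d]) (use assms k Suc gap i' in auto)
    qed
  qed
qed

lemma shadow_reach_step:
  assumes "shadow_reach a x n" "x = Inr z" "attach_web_E E v r x y"
  shows "neighbour_bound a y n"
proof -
  have x_level: "j \<noteq> 0" if "x = web_vtx v r i j" for i j
  proof
    assume "j = 0"
    with that assms(2) show False by (simp add: web_vtx_def)
  qed
  have "web_edge v r x y \<or> web_edge v r y x"
    using assms(2,3) by (auto simp: attach_web_E_def)
  then show ?thesis
  proof
    assume "web_edge v r x y"
    then consider
      (spoke) i j where "i < r" "j < r" "x = web_vtx v r i j" "y = web_vtx v r i (Suc j)"
    | (rim) i j where "i < r" "1 \<le> j" "j \<le> r - 1" "x = web_vtx v r i j" "y = web_vtx v r (Suc i) j"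
    | (diagonal) i j where "i < r" "1 \<le> j" "j \<le> r - 1"
        "x = web_vtx v r (i + r - 1) (j - 1)" "y = web_vtx v r i j"
      unfolding web_edge_def by blast
    then show ?thesis
    proof cases
      case spoke
      then have "1 \<le> j" using x_level by fastforce
      then show ?thesis
        using shadow_reach_spoke_up[of i j a n] spoke assms(1) neighbour_bound_inner[of "Suc j"] by simp
    next
      case rim
      then show ?thesis
        using shadow_reach_rim_succ[of i j a n] assms(1) r_ge_2 web_vtx_Suc[of i r v j]
          neighbour_bound_inner by simp
    next
      case diagonal
      then have "j - 1 \<noteq> 0" using x_level by blast
      then show ?thesis
        using shadow_reach_diagonal_up[of i j a n] diagonal assms(1) web_vtx_add_pred[of i r v "j - 1"]
          neighbour_bound_inner by simp
    qed
  next
    assume "web_edge v r y x"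
    then consider
      (spoke) i j where "i < r" "j < r" "y = web_vtx v r i j" "x = web_vtx v r i (Suc j)"
    | (rim) i j where "i < r" "1 \<le> j" "j \<le> r - 1" "y = web_vtx v r i j" "x = web_vtx v r (Suc i) j"
    | (diagonal) i j where "i < r" "1 \<le> j" "j \<le> r - 1"
        "y = web_vtx v r (i + r - 1) (j - 1)" "x = web_vtx v r i j"
      unfolding web_edge_def by blast
    then show ?thesis
    proof cases
      case spoke
      then show ?thesis
        using shadow_reach_spoke_down[of i j a n] assms(1) by simp
    next
      case rim
      then show ?thesis
        using shadow_reach_rim_pred[of i j a n] assms(1) r_ge_2 web_vtx_Suc[of i r v j]
          neighbour_bound_inner by simp
    next
      case diagonal
      then show ?thesis
        using shadow_reach_diagonal_down[of i j a n] assms(1) r_ge_2 web_vtx_add_pred[of i r v "j - 1"]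
        by simp
    qed
  qed
qed

lemma shadow_reach_entry:
  assumes "attach_web_E E v r (Inl b) y" "y = Inr z" "reachable_within E a b n"
  shows "shadow_reach a y (Suc n)"
proof -
  have "web_edge v r (Inl b) y"
    using assms(1,2) web_edge_target_Inr[of v r y "Inl b"] unfolding attach_web_E_def by auto
  then consider
      (spoke) i j where "i < r" "j < r" "Inl b = web_vtx v r i j" "y = web_vtx v r i (Suc j)"
    | (rim) i j where "i < r" "1 \<le> j" "Inl b = web_vtx v r i j"
    | (diagonal) i j where "i < r" "1 \<le> j" "j \<le> r - 1"
        "Inl b = web_vtx v r (i + r - 1) (j - 1)" "y = web_vtx v r i j"
    unfolding web_edge_def by blast
  then show ?thesis
  proof cases
    case spoke
    then have "j = 0" "b = v i" using web_vtx_eq_Inl_iff[of v r i j b] by auto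
    then show ?thesis
      unfolding spoke(4) by (intro shadow_reachI[of i a n]) (use spoke assms r_ge_2 cyc_gap_self in auto)
  next
    case rim
    then show ?thesis using web_vtx_eq_Inl_iff[of v r i j b] by auto
  next
    case diagonal
    then have "j = 1" "b = v (cyc_pred r i)"
      using web_vtx_eq_Inl_iff[of v r "i + r - 1" "j - 1" b] add_pred_mod_eq_cyc_pred[of i r] by auto
    then show ?thesis
      unfolding diagonal(5) \<open>j = 1\<close>
      by (intro shadow_reachI[of "cyc_pred r i" a n])
        (use diagonal assms r_ge_2 cyc_gap_pred_right_self cyc_pred_less in auto)
  qed
qed

lemma attach_web_E_Inl_Inl: "attach_web_E E v r (Inl b) (Inl c) \<Longrightarrow> E b c"
  using web_edge_target_Inr[of v r "Inl c" "Inl b"] web_edge_target_Inr[of v r "Inl b" "Inl c"]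
  unfolding attach_web_E_def by auto

lemma walk_attach_web_bound:
  assumes "walk_betw (attach_web_E E v r) (Inl a) p y"
  shows "case y of
           Inl c \<Rightarrow> reachable_within E a c (length p - 1) \<and>
                    ((\<exists>z. Inr z \<in> set p) \<longrightarrow> reachable_within E a c (length p - 2))
         | Inr _ \<Rightarrow> shadow_reach a y (length p - 1)"
  using assms
proof (induction p arbitrary: y rule: rev_induct)
  case Nil
  then show ?case by (simp add: walk_betw_def)
next
  case (snoc y' p)
  then have "y' = y" by (simp add: walk_betw_def)
  show ?case
  proof (cases "p = []")
    case True
    then show ?thesis
      using snoc.prems \<open>y' = y\<close> reachable_within_refl by (auto simp: walk_betw_def)
  next
    case False
    note walk = walk_betw_snocD[OF snoc.prems[unfolded \<open>y' = y\<close>] False]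
    note IH = snoc.IH[OF walk(1)]
    have len: "length p - 1 = length (p @ [y]) - 2" "Suc (length p - 1) = length (p @ [y]) - 1"
      using False by auto
    show ?thesis
    proof (cases "last p")
      case (Inl b)
      then have b: "reachable_within E a b (length p - 1)"
        "(\<exists>z. Inr z \<in> set p) \<Longrightarrow> reachable_within E a b (length p - 2)"
        using IH by auto
      show ?thesis
      proof (cases y)
        case (Inl c)
        then have "E b c" using attach_web_E_Inl_Inl walk(2) \<open>last p = Inl b\<close> by simp
        then have "reachable_within E a c (length (p @ [y]) - 1)"
          using reachable_within_step[OF b(1)] len by simp
        moreover have "reachable_within E a c (length (p @ [y]) - 2)" if "\<exists>z. Inr z \<in> set p"
        proof -
          have "2 \<le> length p"
            using that \<open>last p = Inl b\<close> False
            by (cases p rule: rev_cases) (auto simp: Suc_le_eq intro: length_pos_if_in_set)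
          then have "Suc (length p - 2) = length (p @ [y]) - 2"
            by simp
          then show ?thesis
            using reachable_within_step[OF b(2)[OF that] \<open>E b c\<close>] by simp
        qed
        ultimately show ?thesis using Inl \<open>y' = y\<close> by auto
      next
        case (Inr z)
        then show ?thesis
          using shadow_reach_entry[of b y z a "length p - 1"] walk(2) \<open>last p = Inl b\<close> b len \<open>y' = y\<close>
          by simp
      qed
    next
      case (Inr z)
      then have "neighbour_bound a y (length p - 1)"
        using shadow_reach_step[of a "last p" "length p - 1" z y] IH walk(2) by simp
      moreover have "Inr z \<in> set p" using Inr False last_in_set by metis
      ultimately show ?thesis
        using len \<open>y' = y\<close> by (cases y) (auto simp: neighbour_bound_def intro: reachable_within_mono)
    qed
  qed
qed

lemma walk_attach_web_Inl:
  assumes "walk_betw (attach_web_E E v r) (Inl a) p (Inl c)"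
  shows "reachable_within E a c (length p - 1)"
    and "Inr z \<in> set p \<Longrightarrow> reachable_within E a c (length p - 2)"
  using walk_attach_web_bound[OF assms] by (auto simp del: split_paired_Ex)

theorem dist_attach_web: "dist (attach_web_E E v r) (Inl a) (Inl c) = dist E a c"
proof (rule antisym)
  show "dist (attach_web_E E v r) (Inl a) (Inl c) \<le> dist E a c"
    unfolding le_dist_iff
  proof (intro allI impI)
    fix q assume "walk_betw E a q c"
    then have "walk_betw (attach_web_E E v r) (Inl a) (map Inl q) (Inl c)"
      by (rule walk_betw_map) (simp add: attach_web_E_def)
    then show "dist (attach_web_E E v r) (Inl a) (Inl c) \<le> enat (length q - 1)"
      using dist_le_walk by fastforce
  qed
  show "dist E a c \<le> dist (attach_web_E E v r) (Inl a) (Inl c)"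
    unfolding le_dist_iff using walk_attach_web_Inl(1) dist_le_reachable_within by metis
qed

theorem shortest_path_avoids_web:
  assumes "shortest_path (attach_web_E E v r) (Inl a) p (Inl c)"
  shows "set p \<inter> web_inner_vertices v r = {}"
proof (rule ccontr)
  assume "set p \<inter> web_inner_vertices v r \<noteq> {}"
  then obtain i j where "web_vtx v r i j \<in> set p" "j \<noteq> 0"
    unfolding web_inner_vertices_def by blast
  then obtain z where "Inr z \<in> set p"
    using web_vtx_Inr by metis
  have walk: "walk_betw (attach_web_E E v r) (Inl a) p (Inl c)"
    using assms by (simp add: shortest_path_def)
  then have "Inl a \<in> set p"
    unfolding walk_betw_def using hd_in_set by metis
  have "2 \<le> length p"
  proof (rule ccontr)
    assume "\<not> 2 \<le> length p"
    with \<open>Inl a \<in> set p\<close> obtain x where "p = [x]"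
      by (cases p) (auto simp: Suc_le_eq)
    with \<open>Inl a \<in> set p\<close> \<open>Inr z \<in> set p\<close> show False
      by auto
  qed
  have "dist E a c \<le> enat (length p - 2)"
    using dist_le_reachable_within walk_attach_web_Inl(2)[OF walk \<open>Inr z \<in> set p\<close>] .
  also have "\<dots> < enat (length p - 1)"
    using \<open>2 \<le> length p\<close> by simp
  also have "\<dots> = dist E a c"
    using assms dist_attach_web by (simp add: shortest_path_def)
  finally show False by simp
qed

end

lemma web_vertex_near_spoke_foot:
  assumes "i < r" "j \<le> r"
  shows "dist (attach_web_E E v r) (Inl (v i)) (web_vtx v r i j) \<le> enat r"
proof -
  define p where "p = map (web_vtx v r i) [0..<Suc j]"
  have "walk_betw (attach_web_E E v r) (Inl (v i)) p (web_vtx v r i j)"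
    unfolding walk_betw_def
  proof (intro conjI allI impI)
    show "p \<noteq> []" "last p = web_vtx v r i j" by (simp_all add: p_def)
    show "hd p = Inl (v i)"
      using assms by (simp add: p_def web_vtx_def upt_conv_Cons del: upt_Suc)
    fix t assume "Suc t < length p"
    then have "t < j" by (simp add: p_def)
    then have "web_edge v r (web_vtx v r i t) (web_vtx v r i (Suc t))"
      unfolding web_edge_def using assms by (intro disjI1 exI[of _ i] exI[of _ t]) simp
    then show "attach_web_E E v r (p ! t) (p ! Suc t)"
      using \<open>t < j\<close> by (simp add: p_def attach_web_E_def nth_append del: upt_Suc)
  qed
  then have "dist (attach_web_E E v r) (Inl (v i)) (web_vtx v r i j) \<le> enat (length p - 1)"
    by (rule dist_le_walk)
  also have "\<dots> \<le> enat r" using assms by (simp add: p_def)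
  finally show ?thesis .
qed

theorem lemma9:
  fixes V :: "'a set" and E :: "'a \<Rightarrow> 'a \<Rightarrow> bool" and v :: "nat \<Rightarrow> 'a" and r :: nat
  assumes G: "simple_graph V E"
    and r: "r \<ge> 3"
    and walk: "\<forall>i < r. E (v i) (v (Suc i mod r))"
  shows "(\<forall>a \<in> V. \<forall>b \<in> V.
            dist (attach_web_E E v r) (Inl a) (Inl b) = dist E a b \<and>
            (\<forall>p. shortest_path (attach_web_E E v r) (Inl a) p (Inl b) \<longrightarrow>
                 set p \<inter> web_inner_vertices v r = {}))
       \<and> (\<forall>x \<in> web_vertices v r. \<exists>a \<in> V. dist (attach_web_E E v r) (Inl a) x \<le> enat r)"
proof -
  interpret web_attachment E v r
    using G r walk by unfold_locales (auto simp: simple_graph_def)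
  have boundary_in_V: "v i \<in> V" if "i < r" for i
    using G boundary_walk[OF that] by (auto simp: simple_graph_def)
  show ?thesis
    using dist_attach_web shortest_path_avoids_web web_vertex_near_spoke_foot boundary_in_V
    unfolding web_vertices_def by fast
qed

end
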